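(* Let $M(A)$ be an RBK manifold with Bott matrix $A$ and $P$-matrix $P$. Suppose $k$ is an even number and there are indices $i_1<\dots<i_{2k}$ such that the columns $A^{i_1}=A^{i_2}=\dots=A^{i_{2k}}$ are equal and nonzero, while all other columns of $A$ are zero. Then $w_2(M(A))=0$, so $M(A)$ has a Spin-structure.
   Context: Real Bott manifolds: let $A=[a_{ij}]$ be an $m\times m$ strictly upper triangular matrix with entries in $\{0,1\}$. For $i=1,\dots,m-1$ let $s_i$ be the Euclidean motion of $\mathbb R^m$ given by $s_i=(\mathrm{diag}[1,\dots,1,(-1)^{a_{i,i+1}},\dots,(-1)^{a_{i,m}}],\ \tfrac12 e_i)$, and $s_m=(I,\tfrac12 e_m)$. $\Gamma(A)=\langle s_1,\dots,s_m\rangle$ is a torsion-free crystallographic group with extension $0\to\mathbb Z^m\to\Gamma(A)\xrightarrow{\pi}\mathbb Z_2^m\to1$, and $M(A)=\mathbb R^m/\Gamma(A)$. Identify $H^*(\mathbb Z_2^m;\mathbb F_2)=\mathbb F_2[x_1,\dots,x_m]$ ($x_i$ dual to the image of $s_i$). The $P$-matrix $P=[p_{ij}]$ has $p_{ii}=1$, $p_{ij}=2$ if $i<j$ and $a_{ij}=1$, and $p_{ij}=0$ otherwise; with $\alpha(0)=0,\alpha(1)=\alpha(2)=1,\alpha(3)=0$, $\beta(0)=\beta(2)=0,\beta(1)=\beta(3)=1$, set $\alpha_j=\sum_i\alpha(p_{ij})x_i$, $\beta_j=\sum_i\beta(p_{ij})x_i$ (so $\alpha_j+\beta_j=\sum_{i<j}a_{ij}x_i$).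 The total Stiefel–Whitney class is $w(M(A))=\pi^*\big(\prod_{j=1}^m(1+\alpha_j+\beta_j)\big)$. An RBK manifold is $M(A)$ with $m=2n$ for which $\{1,\dots,2n\}$ can be partitioned into $n$ pairs $\{j_k,j_{k+n}\}$ with equal columns $A^{j_k}=A^{j_{k+n}}$ ($A^j$ = $j$-th column of $A$). $M(A)$ has a Spin-structure iff $w_2(M(A))=0$. *)

theory Defs
  imports "HOL-Library.Poly_Mapping" "HOL-Library.Z2"
begin

(* Bott matrices: m x m strictly upper triangular 0/1 matrices, indices 1..m.
   A i j = True  means  a_ij = 1. *)
definition bott_matrix :: "nat \<Rightarrow> (nat \<Rightarrow> nat \<Rightarrow> bool) \<Rightarrow> bool" where
  "bott_matrix m A \<longleftrightarrow> (\<forall>i j. A i j \<longrightarrow> 1 \<le> i \<and> i < j \<and> j \<le> m)"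

definition col :: "(nat \<Rightarrow> nat \<Rightarrow> bool) \<Rightarrow> nat \<Rightarrow> nat \<Rightarrow> bool" where
  "col A j = (\<lambda>i. A i j)"

definition RBK :: "nat \<Rightarrow> (nat \<Rightarrow> nat \<Rightarrow> bool) \<Rightarrow> bool" where
  "RBK m A \<longleftrightarrow> bott_matrix m A \<and> even m \<and>
     (\<exists>jj :: nat \<Rightarrow> nat. bij_betw jj {1..m} {1..m} \<and>
        (\<forall>k\<in>{1..m div 2}. col A (jj k) = col A (jj (k + m div 2))))"

(* F_2[x_1, x_2, ...] = H^*(Z_2^m; F_2): monomials are exponent vectors nat \<Rightarrow>\<^sub>0 nat *)
type_synonym f2poly = "(nat \<Rightarrow>\<^sub>0 nat) \<Rightarrow>\<^sub>0 bit"

definition X :: "nat \<Rightarrow> f2poly" where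
  "X i = Poly_Mapping.single (Poly_Mapping.single i 1) 1"

definition mon_deg :: "(nat \<Rightarrow>\<^sub>0 nat) \<Rightarrow> nat" where
  "mon_deg \<mu> = (\<Sum>i\<in>Poly_Mapping.keys \<mu>. Poly_Mapping.lookup \<mu> i)"

definition hpart :: "nat \<Rightarrow> f2poly \<Rightarrow> f2poly" where
  "hpart d p = Abs_poly_mapping (\<lambda>\<mu>. Poly_Mapping.lookup p \<mu> when mon_deg \<mu> = d)"

definition Pmat :: "(nat \<Rightarrow> nat \<Rightarrow> bool) \<Rightarrow> nat \<Rightarrow> nat \<Rightarrow> nat" where
  "Pmat A i j = (if i = j then 1 else if i < j \<and> A i j then 2 else 0)"

definition alpha_fn :: "nat \<Rightarrow> bool" where
  "alpha_fn p \<longleftrightarrow> p = 1 \<or> p = 2"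

definition beta_fn :: "nat \<Rightarrow> bool" where
  "beta_fn p \<longleftrightarrow> p = 1 \<or> p = 3"

definition alpha :: "nat \<Rightarrow> (nat \<Rightarrow> nat \<Rightarrow> bool) \<Rightarrow> nat \<Rightarrow> f2poly" where
  "alpha m A j = (\<Sum>i\<in>{1..m}. if alpha_fn (Pmat A i j) then X i else 0)"

definition beta :: "nat \<Rightarrow> (nat \<Rightarrow> nat \<Rightarrow> bool) \<Rightarrow> nat \<Rightarrow> f2poly" where
  "beta m A j = (\<Sum>i\<in>{1..m}. if beta_fn (Pmat A i j) then X i else 0)"

(* total Stiefel-Whitney class in H^*(Z_2^m), before applying pi^* *)
definition sw_total_Z2m :: "nat \<Rightarrow> (nat \<Rightarrow> nat \<Rightarrow> bool) \<Rightarrow> f2poly" where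
  "sw_total_Z2m m A = (\<Prod>j\<in>{1..m}. 1 + alpha m A j + beta m A j)"

(* kernel of pi^* : H^*(Z_2^m) \<rightarrow> H^*(M(A)) = F_2[x]/(x_j^2 + x_j \<Sum>_{i<j} a_ij x_i) *)
definition bott_rel :: "nat \<Rightarrow> (nat \<Rightarrow> nat \<Rightarrow> bool) \<Rightarrow> nat \<Rightarrow> f2poly" where
  "bott_rel m A j = X j * X j + X j * (\<Sum>i\<in>{1..<j}. if A i j then X i else 0)"

definition in_ker_pi :: "nat \<Rightarrow> (nat \<Rightarrow> nat \<Rightarrow> bool) \<Rightarrow> f2poly \<Rightarrow> bool" where
  "in_ker_pi m A p \<longleftrightarrow> (\<exists>q :: nat \<Rightarrow> f2poly. p = (\<Sum>j\<in>{1..m}. q j * bott_rel m A j))"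

(* w_2(M(A)) = pi^*(degree-2 part of the product) vanishes *)
definition w2_vanishes :: "nat \<Rightarrow> (nat \<Rightarrow> nat \<Rightarrow> bool) \<Rightarrow> bool" where
  "w2_vanishes m A \<longleftrightarrow> in_ker_pi m A (hpart 2 (sw_total_Z2m m A))"

end

theory Submission
  imports Defs
begin

text \<open>By the choice of the P-matrix, \<open>\<alpha>\<^sub>j + \<beta>\<^sub>j\<close> is the linear form read off the
  \<open>j\<close>-th column of \<open>A\<close>. All nonzero columns equal one column with linear form \<open>L\<close>, so the
  total class is \<open>(1 + L)\<^sup>2\<^sup>k\<close>. In characteristic 2 and with \<open>k\<close> even this is
  \<open>(1 + L\<^sup>4)\<^bsup>k/2\<^esup>\<close>, whose monomials all have degree divisible by 4; hence its degree-2
  part is already zero in \<open>F\<^sub>2[x]\<close>, before passing to the quotient by the Bott relations.\<close>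

lemma f2poly_add_self [simp]: "(p::f2poly) + p = 0"
proof -
  have "(1::f2poly) + 1 = Poly_Mapping.single 0 (1 + 1)"
    by (simp only: Poly_Mapping.single_add Poly_Mapping.single_one)
  also have "\<dots> = 0" by simp
  finally have "(1 + 1) * p = 0" by (simp only: mult_zero_left)
  then show ?thesis by (simp only: distrib_right mult_1_left)
qed

lemma f2poly_one_plus_square: "(1 + p)^2 = 1 + (p::f2poly)^2"
proof -
  have "(1 + p)^2 = 1 + p^2 + (p + p)"
    by (simp only: power2_eq_square distrib_left distrib_right mult_1_left mult_1_right add_ac)
  then show ?thesis by (simp only: f2poly_add_self add_0_right)
qed

lemma f2poly_one_plus_power4: "(1 + p)^4 = 1 + (p::f2poly)^4"
proof -
  have "(1 + p)^4 = ((1 + p)^2)^2" by (simp flip: power_mult)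
  also have "\<dots> = 1 + (p^2)^2" by (simp only: f2poly_one_plus_square)
  finally show ?thesis by (simp flip: power_mult)
qed

definition mon_degs_satisfy :: "(nat \<Rightarrow> bool) \<Rightarrow> f2poly \<Rightarrow> bool" where
  "mon_degs_satisfy P p \<longleftrightarrow> (\<forall>\<mu>\<in>Poly_Mapping.keys p. P (mon_deg \<mu>))"

lemma mon_deg_add: "mon_deg (\<mu> + \<nu>) = mon_deg \<mu> + mon_deg \<nu>"
  unfolding mon_deg_def by (rule setsum_keys_plus_distrib) auto

lemma mon_degs_satisfy_zero: "mon_degs_satisfy P 0"
  unfolding mon_degs_satisfy_def by simp

lemma mon_degs_satisfy_one: "P 0 \<Longrightarrow> mon_degs_satisfy P 1"
  unfolding mon_degs_satisfy_def mon_deg_def by simp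

lemma mon_degs_satisfy_X: "mon_degs_satisfy (\<lambda>d. d = 1) (X i)"
  unfolding mon_degs_satisfy_def X_def mon_deg_def by simp

lemma mon_degs_satisfy_add:
  assumes "mon_degs_satisfy P p" "mon_degs_satisfy P q"
  shows "mon_degs_satisfy P (p + q)"
  unfolding mon_degs_satisfy_def
proof
  fix \<mu> assume "\<mu> \<in> Poly_Mapping.keys (p + q)"
  then have "\<mu> \<in> Poly_Mapping.keys p \<union> Poly_Mapping.keys q" by (rule subsetD[OF keys_add])
  then show "P (mon_deg \<mu>)" using assms unfolding mon_degs_satisfy_def by (elim UnE) simp_all
qed

lemma mon_degs_satisfy_sum:
  assumes "\<And>i. i \<in> I \<Longrightarrow> mon_degs_satisfy P (f i)"
  shows "mon_degs_satisfy P (sum f I)"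
  unfolding mon_degs_satisfy_def
proof
  fix \<mu> assume "\<mu> \<in> Poly_Mapping.keys (sum f I)"
  then have "\<mu> \<in> (\<Union>i\<in>I. Poly_Mapping.keys (f i))" by (rule subsetD[OF keys_sum])
  then obtain i where "i \<in> I" "\<mu> \<in> Poly_Mapping.keys (f i)" by (elim UN_E)
  then show "P (mon_deg \<mu>)" using assms unfolding mon_degs_satisfy_def by blast
qed

lemma mon_degs_satisfy_mult:
  assumes "mon_degs_satisfy P p" "mon_degs_satisfy Q q" "\<And>a b. P a \<Longrightarrow> Q b \<Longrightarrow> R (a + b)"
  shows "mon_degs_satisfy R (p * q)"
  unfolding mon_degs_satisfy_def
proof
  fix \<mu> assume "\<mu> \<in> Poly_Mapping.keys (p * q)"
  then have "\<mu> \<in> {a + b | a b. a \<in> Poly_Mapping.keys p \<and> b \<in> Poly_Mapping.keys q}"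
    by (rule subsetD[OF keys_mult])
  then obtain a b where "\<mu> = a + b" "a \<in> Poly_Mapping.keys p" "b \<in> Poly_Mapping.keys q"
    by blast
  then show "R (mon_deg \<mu>)"
    using assms unfolding mon_degs_satisfy_def by (simp add: mon_deg_add)
qed

lemma mon_degs_satisfy_power_homogeneous:
  "mon_degs_satisfy (\<lambda>d. d = e) p \<Longrightarrow> mon_degs_satisfy (\<lambda>d. d = n * e) (p ^ n)"
  by (induction n) (auto intro!: mon_degs_satisfy_one mon_degs_satisfy_mult)

lemma mon_degs_satisfy_power_dvd:
  "mon_degs_satisfy (\<lambda>d. c dvd d) p \<Longrightarrow> mon_degs_satisfy (\<lambda>d. c dvd d) (p ^ n)"
  by (induction n) (auto intro!: mon_degs_satisfy_one mon_degs_satisfy_mult)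

lemma hpart_eq_0:
  assumes "mon_degs_satisfy P p" "\<not> P d"
  shows "hpart d p = 0"
proof -
  have "(Poly_Mapping.lookup p \<mu> when mon_deg \<mu> = d) = 0" for \<mu>
  proof (cases "\<mu> \<in> Poly_Mapping.keys p")
    case True
    then have "mon_deg \<mu> \<noteq> d" using assms unfolding mon_degs_satisfy_def by metis
    then show ?thesis by simp
  qed (simp add: in_keys_iff)
  then show ?thesis unfolding hpart_def by simp
qed

definition col_form :: "nat \<Rightarrow> (nat \<Rightarrow> nat \<Rightarrow> bool) \<Rightarrow> nat \<Rightarrow> f2poly" where
  "col_form m A j = (\<Sum>i\<in>{1..m}. if A i j then X i else 0)"

lemma mon_degs_satisfy_col_form: "mon_degs_satisfy (\<lambda>d. d = 1) (col_form m A j)"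
  unfolding col_form_def
proof (rule mon_degs_satisfy_sum)
  show "mon_degs_satisfy (\<lambda>d. d = 1) (if A i j then X i else 0)" for i
    by (cases "A i j") (simp_all only: if_True if_False mon_degs_satisfy_X mon_degs_satisfy_zero)
qed

lemma col_form_cong: "col A j = col A j' \<Longrightarrow> col_form m A j = col_form m A j'"
  unfolding col_form_def col_def by (simp add: fun_eq_iff)

lemma col_form_zero_col: "col A j = (\<lambda>_. False) \<Longrightarrow> col_form m A j = 0"
  unfolding col_form_def col_def by (simp add: fun_eq_iff)

lemma alpha_plus_beta:
  assumes "bott_matrix m A"
  shows "alpha m A j + beta m A j = col_form m A j"
proof -
  have termwise: "(if alpha_fn (Pmat A i j) then X i else 0) + (if beta_fn (Pmat A i j) then X i else 0)
      = (if A i j then X i else 0)" for i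
    using assms unfolding Pmat_def alpha_fn_def beta_fn_def bott_matrix_def by auto
  show ?thesis
    unfolding alpha_def beta_def col_form_def sum.distrib[symmetric] by (simp only: termwise)
qed

lemma sw_total_Z2m_equal_columns:
  assumes "bott_matrix m A" "I \<subseteq> {1..m}"
    and "\<forall>j\<in>I. col A j = col A j\<^sub>0"
    and "\<forall>j\<in>{1..m} - I. col A j = (\<lambda>_. False)"
  shows "sw_total_Z2m m A = (1 + col_form m A j\<^sub>0) ^ card I"
proof -
  have "sw_total_Z2m m A = (\<Prod>j\<in>{1..m}. 1 + col_form m A j)"
    unfolding sw_total_Z2m_def using alpha_plus_beta[OF assms(1)] by (simp add: add.assoc)
  also have "\<dots> = (\<Prod>j\<in>I. 1 + col_form m A j)"
  proof (rule prod.mono_neutral_right)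
    show "\<forall>j\<in>{1..m} - I. 1 + col_form m A j = 1"
      using assms(4) col_form_zero_col by simp
  qed (use assms(2) in simp_all)
  also have "\<dots> = (\<Prod>j\<in>I. 1 + col_form m A j\<^sub>0)"
    using assms(3) by (intro prod.cong refl arg_cong[where f = "(+) 1"] col_form_cong) simp
  also have "\<dots> = (1 + col_form m A j\<^sub>0) ^ card I"
    by (rule prod_constant)
  finally show ?thesis .
qed

lemma mon_degs_satisfy_power_one_plus_linear:
  assumes "mon_degs_satisfy (\<lambda>d. d = 1) L" "even k"
  shows "mon_degs_satisfy (\<lambda>d. 4 dvd d) ((1 + L) ^ (2*k))"
proof -
  have "2*k = 4*(k div 2)" using assms(2) by auto
  then have power: "(1 + L) ^ (2*k) = (1 + L^4) ^ (k div 2)"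
    by (simp only: power_mult f2poly_one_plus_power4)
  have L4: "mon_degs_satisfy (\<lambda>d. 4 dvd d) (L^4)"
    using mon_degs_satisfy_power_homogeneous[OF assms(1), of 4]
    unfolding mon_degs_satisfy_def by auto
  have "mon_degs_satisfy (\<lambda>d. 4 dvd d) (1 + L^4)"
    by (rule mon_degs_satisfy_add[OF mon_degs_satisfy_one L4]) simp
  then show ?thesis unfolding power by (rule mon_degs_satisfy_power_dvd)
qed

theorem lemma3p2:
  fixes m k :: nat and A :: "nat \<Rightarrow> nat \<Rightarrow> bool" and idx :: "nat \<Rightarrow> nat"
  assumes "RBK m A"
    and "even k"
    and "strict_mono_on {1..2*k} idx"
    and "idx ` {1..2*k} \<subseteq> {1..m}"
    and "\<forall>s\<in>{1..2*k}. \<forall>t\<in>{1..2*k}. col A (idx s) = col A (idx t)"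
    and "\<forall>s\<in>{1..2*k}. col A (idx s) \<noteq> (\<lambda>_. False)"
    and "\<forall>j\<in>{1..m} - idx ` {1..2*k}. col A j = (\<lambda>_. False)"
  shows "w2_vanishes m A"
proof -
  define I where "I = idx ` {1..2*k}"
  have bott: "bott_matrix m A" using assms(1) unfolding RBK_def by blast
  have card: "card I = 2*k"
    using card_image[OF strict_mono_on_imp_inj_on[OF assms(3)]] unfolding I_def by simp
  have cols: "\<forall>j\<in>I. col A j = col A (idx 1)"
  proof
    fix j assume "j \<in> I"
    then obtain s where s: "s \<in> {1..2*k}" "j = idx s" unfolding I_def by blast
    then have "1 \<in> {1..2*k}" by simp
    with s show "col A j = col A (idx 1)" using assms(5) by blast
  qed
  have "sw_total_Z2m m A = (1 + col_form m A (idx 1)) ^ (2*k)"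
    using sw_total_Z2m_equal_columns[OF bott assms(4)[folded I_def] cols assms(7)[folded I_def]]
    unfolding card .
  then have "hpart 2 (sw_total_Z2m m A) = 0"
    using mon_degs_satisfy_power_one_plus_linear[OF mon_degs_satisfy_col_form assms(2)]
    by (intro hpart_eq_0[of "\<lambda>d. 4 dvd d"]) simp_all
  then show ?thesis unfolding w2_vanishes_def in_ker_pi_def
    by (intro exI[of _ "\<lambda>_. 0"]) simp
qed

end
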